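(* Let $A=[a_{ij}]$ be an $n\times n$ real matrix and suppose that $Av=\lambda v$ for some real number $\lambda$ and some real vector $v=(v_1,\dots,v_n)^T$ with $v_i\neq 0$ for all $i$. Let $S=\mathrm{diag}(v)$ and $B=S^{-1}AS$. If $\lambda_2$ is an eigenvalue of $A$ different from $\lambda$, then $\lambda_2$ lies in the Gershgorin region of the second type of $B^T$.
   Context: For a real $n\times n$ matrix $M=[m_{ij}]$ and an index $j$, let $y_1\ge y_2\ge\dots\ge y_n$ be the non-increasing rearrangement of the $n$ numbers $m_{1j},\dots,m_{j-1,j},0,m_{j+1,j},\dots,m_{nj}$ (the $j$-th column of $M$ with its diagonal entry replaced by $0$). Define $\hat r_j=\sum_{t=1}^{(n-1)/2}y_t-\sum_{t=(n+3)/2}^{n}y_t$ if $n$ is odd, and $\hat r_j=\sum_{t=1}^{n/2}y_t-\sum_{t=n/2+1}^{n}y_t$ if $n$ is even. The Gershgorin disc of the second type of $M^T$ associated with index $j$ is the closed disc $\{z\in\mathbb{C}:|z-m_{jj}|\le \hat r_j\}$, and the Gershgorin region of the second type of $M^T$ is the union of these $n$ discs. *)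

theory Defs
  imports "Jordan_Normal_Form.Char_Poly"
begin

definition gersh2_sorted_col :: "real mat \<Rightarrow> nat \<Rightarrow> real list" where
  "gersh2_sorted_col M j =
     rev (sort (map (\<lambda>i. if i = j then 0 else M $$ (i, j)) [0..<dim_row M]))"

text \<open>The radius r-hat j (positions 1..(n-1)/2 minus positions (n+3)/2..n if n odd;
  positions 1..n/2 minus positions n/2+1..n if n even; 1-based in the paper).\<close>
definition gersh2_radius :: "real mat \<Rightarrow> nat \<Rightarrow> real" where
  "gersh2_radius M j =
     (let n = dim_row M; ys = gersh2_sorted_col M j in
      if odd n then sum_list (take ((n - 1) div 2) ys) - sum_list (drop ((n + 1) div 2) ys)
      else sum_list (take (n div 2) ys) - sum_list (drop (n div 2) ys))"

definition gersh2_region_transpose :: "real mat \<Rightarrow> complex set" where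
  "gersh2_region_transpose M =
     (\<Union>j\<in>{0..<dim_row M}. {z. cmod (z - complex_of_real (M $$ (j, j))) \<le> gersh2_radius M j})"

end

theory Submission
  imports Defs
begin

(*
  Conjugating by S = diag v turns the eigenvector v into the all-ones vector, so B = S^-1 A S
  has all row sums equal to lam and the same eigenvalues as A. A left eigenvector w of B for
  lam2 <> lam is orthogonal to the all-ones vector, i.e. sum_i w_i = 0. Hence for every real c,
  (lam2 - b_jj) w_j = sum_i w_i (y_i - c), where y is column j of B with its diagonal entry
  replaced by 0. Choosing j with |w_j| maximal gives |lam2 - b_jj| <= sum_i |y_i - c|, and for
  c a median of the y_i this sum is exactly the radius r-hat_j.
*)

lemma sum_list_abs_diff_split:
  fixes ys :: "real list"
  assumes "\<forall>y\<in>set (take k ys). c \<le> y" and "\<forall>y\<in>set (drop k ys). y \<le> c"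
  shows "(\<Sum>y\<leftarrow>ys. \<bar>y - c\<bar>) = sum_list (take k ys) - sum_list (drop k ys)
           + (real (length (drop k ys)) - real (length (take k ys))) * c"
proof -
  have "(\<Sum>y\<leftarrow>ys. \<bar>y - c\<bar>) = (\<Sum>y\<leftarrow>take k ys. \<bar>y - c\<bar>) + (\<Sum>y\<leftarrow>drop k ys. \<bar>y - c\<bar>)"
    by (metis append_take_drop_id map_append sum_list_append)
  also have "(\<Sum>y\<leftarrow>take k ys. \<bar>y - c\<bar>) = (\<Sum>y\<leftarrow>take k ys. y - c)"
    using assms(1) by (intro arg_cong[where f = sum_list] map_cong) auto
  also have "(\<Sum>y\<leftarrow>drop k ys. \<bar>y - c\<bar>) = (\<Sum>y\<leftarrow>drop k ys. c - y)"
    using assms(2) by (intro arg_cong[where f = sum_list] map_cong) auto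
  finally show ?thesis by (simp add: sum_list_subtractf sum_list_triv algebra_simps)
qed

lemma sum_list_abs_diff_median:
  fixes ys :: "real list"
  assumes sorted: "sorted (rev ys)" and ne: "ys \<noteq> []"
  defines "n \<equiv> length ys"
  shows "(\<Sum>y\<leftarrow>ys. \<bar>y - ys ! (n div 2)\<bar>) =
     (if odd n then sum_list (take ((n - 1) div 2) ys) - sum_list (drop ((n + 1) div 2) ys)
      else sum_list (take (n div 2) ys) - sum_list (drop (n div 2) ys))"
proof -
  let ?m = "n div 2"
  let ?c = "ys ! ?m"
  have m: "?m < n" using ne by (simp add: n_def)
  have "\<forall>y\<in>set (take ?m ys). ?c \<le> y"
    using m sorted_rev_nth_mono[OF sorted] by (auto simp: in_set_conv_nth n_def)
  moreover have "\<forall>y\<in>set (drop ?m ys). y \<le> ?c"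
    using m sorted_rev_nth_mono[OF sorted] by (auto simp: in_set_conv_nth n_def)
  ultimately have split: "(\<Sum>y\<leftarrow>ys. \<bar>y - ?c\<bar>) = sum_list (take ?m ys) - sum_list (drop ?m ys)
      + (real (n - ?m) - real ?m) * ?c"
    using m by (simp add: sum_list_abs_diff_split n_def min_def)
  show ?thesis
  proof (cases "odd n")
    case True
    have "drop ?m ys = ?c # drop (Suc ?m) ys"
      using m by (simp add: Cons_nth_drop_Suc n_def)
    moreover have "(n - 1) div 2 = ?m" "(n + 1) div 2 = Suc ?m" "n - ?m = Suc ?m"
      using True by presburger+
    ultimately show ?thesis using split True by simp
  next
    case False
    then have "n - ?m = ?m" by presburger
    then show ?thesis using split False by simp
  qed
qed

lemma gersh2_radius_eq_sum_abs_diff: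
  fixes M :: "real mat"
  assumes "dim_row M > 0"
  obtains c where
    "gersh2_radius M j = (\<Sum>i\<in>{0..<dim_row M}. \<bar>(if i = j then 0 else M $$ (i, j)) - c\<bar>)"
proof
  let ?n = "dim_row M"
  let ?col = "map (\<lambda>i. if i = j then 0 else M $$ (i, j)) [0..<?n]"
  let ?ys = "gersh2_sorted_col M j"
  let ?c = "?ys ! (?n div 2)"
  have ys: "?ys = rev (sort ?col)" by (simp add: gersh2_sorted_col_def)
  have len: "length ?ys = ?n" by (simp add: ys)
  have sorted: "sorted (rev ?ys)" by (simp add: ys)
  have nonempty: "?ys \<noteq> []" using assms len by force
  have radius: "gersh2_radius M j = (\<Sum>y\<leftarrow>?ys. \<bar>y - ?c\<bar>)"
    using sum_list_abs_diff_median[OF sorted nonempty] unfolding len gersh2_radius_def Let_def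
    by (rule sym)
  have "mset (map (\<lambda>y. \<bar>y - ?c\<bar>) ?ys) = mset (map (\<lambda>y. \<bar>y - ?c\<bar>) ?col)"
    by (simp only: ys mset_map mset_rev mset_sort)
  then have "(\<Sum>y\<leftarrow>?ys. \<bar>y - ?c\<bar>) = (\<Sum>y\<leftarrow>?col. \<bar>y - ?c\<bar>)"
    by (simp only: flip: sum_mset_sum_list)
  also have "\<dots> = (\<Sum>i\<in>{0..<?n}. \<bar>(if i = j then 0 else M $$ (i, j)) - ?c\<bar>)"
    by (simp add: interv_sum_list_conv_sum_set_nat comp_def)
  finally show "gersh2_radius M j = (\<Sum>i\<in>{0..<?n}. \<bar>(if i = j then 0 else M $$ (i, j)) - ?c\<bar>)"
    using radius by simp
qed

lemma zero_sum_eigenvector_column_bound: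
  fixes w :: "'i \<Rightarrow> complex" and b :: "'i \<Rightarrow> real"
  assumes I: "finite I" and j: "j \<in> I"
    and zero_sum: "(\<Sum>i\<in>I. w i) = 0"
    and max: "\<forall>i\<in>I. cmod (w i) \<le> cmod (w j)" and "w j \<noteq> 0"
    and column: "(\<Sum>i\<in>I. w i * of_real (b i)) = mu * w j"
  shows "cmod (mu - of_real (b j)) \<le> (\<Sum>i\<in>I. \<bar>(if i = j then 0 else b i) - c\<bar>)"
proof -
  define y where "y i = (if i = j then 0 else b i)" for i
  have "(\<Sum>i\<in>I. w i * of_real (b i)) = (\<Sum>i\<in>I. w i * of_real (y i)) + w j * of_real (b j)"
    using I j by (simp add: y_def sum.If_cases algebra_simps Int_absorb1 sum.remove)
  then have "(mu - of_real (b j)) * w j = (\<Sum>i\<in>I. w i * of_real (y i)) - of_real c * (\<Sum>i\<in>I. w i)"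
    using column zero_sum by (simp add: algebra_simps)
  also have "\<dots> = (\<Sum>i\<in>I. w i * of_real (y i - c))"
    by (simp add: algebra_simps sum_subtractf sum_distrib_left)
  finally have "cmod (mu - of_real (b j)) * cmod (w j) = cmod (\<Sum>i\<in>I. w i * of_real (y i - c))"
    by (metis norm_mult)
  also have "\<dots> \<le> (\<Sum>i\<in>I. cmod (w i) * \<bar>y i - c\<bar>)"
    by (rule order_trans[OF norm_sum]) (simp add: norm_mult flip: of_real_diff)
  also have "\<dots> \<le> (\<Sum>i\<in>I. cmod (w j) * \<bar>y i - c\<bar>)"
    using max by (intro sum_mono mult_right_mono) auto
  finally show ?thesis
    using \<open>w j \<noteq> 0\<close> by (simp add: y_def sum_distrib_left[symmetric] mult.commute)
qed

lemma eigenvalue_transpose_mat: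
  fixes A :: "'a :: field mat"
  assumes "A \<in> carrier_mat n n"
  shows "eigenvalue (transpose_mat A) k \<longleftrightarrow> eigenvalue A k"
  using assms by (simp add: eigenvalue_root_char_poly[of _ n])

lemma left_eigenvector_sum_eq_0:
  fixes M :: "'a :: field mat"
  assumes M: "M \<in> carrier_mat n n" and w: "w \<in> carrier_vec n"
    and right: "M *\<^sub>v vec n (\<lambda>_. 1) = a \<cdot>\<^sub>v vec n (\<lambda>_. 1)"
    and left: "transpose_mat M *\<^sub>v w = b \<cdot>\<^sub>v w" and "a \<noteq> b"
  shows "(\<Sum>i\<in>{0..<n}. w $ i) = 0"
proof -
  let ?one = "vec n (\<lambda>_. 1) :: 'a vec"
  have "b * (w \<bullet> ?one) = (transpose_mat M *\<^sub>v w) \<bullet> ?one"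
    using w by (simp add: left smult_scalar_prod_distrib)
  also have "\<dots> = w \<bullet> (M *\<^sub>v ?one)"
    using M w by (simp add: transpose_vec_mult_scalar)
  also have "\<dots> = a * (w \<bullet> ?one)"
    using w by (simp add: right scalar_prod_smult_distrib)
  finally have "w \<bullet> ?one = 0" using \<open>a \<noteq> b\<close> by simp
  then show ?thesis using w by (simp add: scalar_prod_def)
qed

lemma eigenvalue_in_gersh2_region_transpose:
  fixes B :: "real mat" and mu :: complex
  assumes B: "B \<in> carrier_mat n n"
    and row_sums: "B *\<^sub>v vec n (\<lambda>_. 1) = lam \<cdot>\<^sub>v vec n (\<lambda>_. 1)"
    and mu: "eigenvalue (map_mat complex_of_real B) mu" and ne: "mu \<noteq> complex_of_real lam"
  shows "mu \<in> gersh2_region_transpose B"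
proof -
  let ?Bc = "map_mat complex_of_real B"
  have Bc: "?Bc \<in> carrier_mat n n" using B by simp
  have "?Bc *\<^sub>v vec n (\<lambda>_. 1) = map_vec complex_of_real (B *\<^sub>v vec n (\<lambda>_. 1))"
    using B by (intro eq_vecI) (auto simp: scalar_prod_def)
  also have "\<dots> = of_real lam \<cdot>\<^sub>v vec n (\<lambda>_. 1)"
    unfolding row_sums by auto
  finally have row_sums_c: "?Bc *\<^sub>v vec n (\<lambda>_. 1) = of_real lam \<cdot>\<^sub>v vec n (\<lambda>_. 1)" .
  have "eigenvalue (transpose_mat ?Bc) mu" using mu eigenvalue_transpose_mat[OF Bc] by simp
  then obtain w where w: "w \<in> carrier_vec n" "w \<noteq> 0\<^sub>v n" "transpose_mat ?Bc *\<^sub>v w = mu \<cdot>\<^sub>v w"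
    unfolding eigenvalue_def eigenvector_def using Bc by auto
  have zero_sum: "(\<Sum>i\<in>{0..<n}. w $ i) = 0"
    using left_eigenvector_sum_eq_0[OF Bc w(1) row_sums_c w(3)] ne by auto
  obtain k where k: "k < n" "w $ k \<noteq> 0"
    using w(1,2) by (metis carrier_vecD eq_vecI index_zero_vec)
  obtain j where j: "j < n" "\<forall>i<n. cmod (w $ i) \<le> cmod (w $ j)"
    using ex_is_arg_min_if_finite[of "{0..<n}" "\<lambda>i. - cmod (w $ i)"] k(1)
    by (auto simp: is_arg_min_linorder)
  have "w $ j \<noteq> 0" using j k by force
  have column: "(\<Sum>i\<in>{0..<n}. w $ i * of_real (B $$ (i, j))) = mu * w $ j"
    using arg_cong[OF w(3), of "\<lambda>u. u $ j"] j(1) w(1) B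
    by (simp add: scalar_prod_def mult.commute)
  have "n > 0" using j(1) by simp
  then obtain c where
    c: "gersh2_radius B j = (\<Sum>i\<in>{0..<n}. \<bar>(if i = j then 0 else B $$ (i, j)) - c\<bar>)"
    using gersh2_radius_eq_sum_abs_diff[of B j] B by auto
  have "cmod (mu - of_real (B $$ (j, j))) \<le> gersh2_radius B j"
    unfolding c using zero_sum_eigenvector_column_bound[OF _ _ zero_sum _ \<open>w $ j \<noteq> 0\<close> column] j
    by auto
  then show ?thesis using j(1) B unfolding gersh2_region_transpose_def by auto
qed

lemma similar_mat_conj:
  assumes A: "A \<in> carrier_mat n n" and S: "S \<in> carrier_mat n n" and Sinv: "Sinv \<in> carrier_mat n n"
    and S_Sinv: "S * Sinv = 1\<^sub>m n" and Sinv_S: "Sinv * S = 1\<^sub>m n"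
  shows "similar_mat A (Sinv * A * S)"
proof -
  have "S * (Sinv * A * S) * Sinv = (S * Sinv) * A * (S * Sinv)"
    using A S Sinv by (simp add: assoc_mult_mat[of _ n n _ n _ n])
  also have "\<dots> = A" using A by (simp add: S_Sinv)
  finally show ?thesis
    using assms by (intro similar_matI[of _ _ S Sinv n]) auto
qed

lemma eigenvalue_map_of_real_similar:
  fixes A B :: "real mat"
  assumes "similar_mat A B"
  shows "eigenvalue (map_mat complex_of_real A) k \<longleftrightarrow> eigenvalue (map_mat complex_of_real B) k"
proof -
  obtain n where A: "A \<in> carrier_mat n n" and B: "B \<in> carrier_mat n n"
    using similar_matD[OF assms] by auto
  have "char_poly (map_mat complex_of_real A) = char_poly (map_mat complex_of_real B)"
    using A B assms by (simp add: of_real_hom.char_poly_hom char_poly_similar)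
  then show ?thesis
    using A B by (simp add: eigenvalue_root_char_poly[of _ n])
qed

lemma conj_mult_mat_vec_ones:
  fixes A S Sinv :: "'a :: field mat"
  assumes A: "A \<in> carrier_mat n n" and S: "S \<in> carrier_mat n n" and Sinv: "Sinv \<in> carrier_mat n n"
    and Sinv_S: "Sinv * S = 1\<^sub>m n" and S_one: "S *\<^sub>v vec n (\<lambda>_. 1) = v"
    and eig: "A *\<^sub>v v = lam \<cdot>\<^sub>v v"
  shows "(Sinv * A * S) *\<^sub>v vec n (\<lambda>_. 1) = lam \<cdot>\<^sub>v vec n (\<lambda>_. 1)"
proof -
  let ?one = "vec n (\<lambda>_. 1) :: 'a vec"
  have v: "v \<in> carrier_vec n" using S S_one by auto
  have "(Sinv * A * S) *\<^sub>v ?one = Sinv *\<^sub>v (A *\<^sub>v (S *\<^sub>v ?one))"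
    by (simp only: assoc_mult_mat_vec[OF mult_carrier_mat[OF Sinv A] S vec_carrier]
        assoc_mult_mat_vec[OF Sinv A mult_mat_vec_carrier[OF S vec_carrier]])
  also have "\<dots> = lam \<cdot>\<^sub>v (Sinv *\<^sub>v (S *\<^sub>v ?one))"
    using Sinv v by (simp add: S_one eig mult_mat_vec)
  also have "Sinv *\<^sub>v (S *\<^sub>v ?one) = ?one"
    using Sinv S by (simp flip: assoc_mult_mat_vec add: Sinv_S)
  finally show ?thesis .
qed

theorem theorem3:
  fixes A :: "real mat" and v :: "real vec" and lam :: real and lam2 :: complex
    and S Sinv :: "real mat" and n :: nat
  assumes A: "A \<in> carrier_mat n n"
    and v: "v \<in> carrier_vec n"
    and v_nz: "\<forall>i<n. v $ i \<noteq> 0"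
    and eig: "A *\<^sub>v v = lam \<cdot>\<^sub>v v"
    and S_def: "S = mat n n (\<lambda>(i, j). if i = j then v $ i else 0)"
    and Sinv: "Sinv \<in> carrier_mat n n" "inverts_mat S Sinv" "inverts_mat Sinv S"
    and lam2: "eigenvalue (map_mat complex_of_real A) lam2"
    and ne: "lam2 \<noteq> complex_of_real lam"
  shows "lam2 \<in> gersh2_region_transpose (Sinv * A * S)"
proof -
  have S: "S \<in> carrier_mat n n" using S_def by simp
  have S_Sinv: "S * Sinv = 1\<^sub>m n" and Sinv_S: "Sinv * S = 1\<^sub>m n"
    using Sinv S unfolding inverts_mat_def by auto
  have S_one: "S *\<^sub>v vec n (\<lambda>_. 1) = v"
    using S_def v by (intro eq_vecI) (auto simp: scalar_prod_def sum.If_cases)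
  have B: "Sinv * A * S \<in> carrier_mat n n" using Sinv(1) A S by simp
  have "similar_mat A (Sinv * A * S)"
    using similar_mat_conj[OF A S Sinv(1) S_Sinv Sinv_S] .
  with lam2 have "eigenvalue (map_mat complex_of_real (Sinv * A * S)) lam2"
    by (simp add: eigenvalue_map_of_real_similar)
  then show ?thesis
    using eigenvalue_in_gersh2_region_transpose[OF B conj_mult_mat_vec_ones[OF A S Sinv(1) Sinv_S S_one eig]] ne
    by blast
qed

end
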